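(* Let $A$ be a real $2\times 2$ matrix and $B$ a real $1\times 2$ matrix, and let $\mathrm{NT}=\{\vec{x}\in\mathbb{R}^2 : BA^k\vec{x}>0 \text{ for all integers } k\ge 0\}$. Suppose $\mathrm{NT}\neq\emptyset$, and let $\partial\mathrm{NT}$ denote its topological boundary in $\mathbb{R}^2$. If $\vec{x}\in\partial\mathrm{NT}$ and $B\vec{x}\neq 0$, then $A\vec{x}\in\partial\mathrm{NT}$.
   Context: $\mathrm{NT}$ is the non-termination set of the loop "while $(B\vec{x}>0)$ $\{\vec{x}:=A\vec{x}\}$", i.e. the set of inputs on which the loop never terminates. *)

theory Defs
  imports "HOL-Analysis.Analysis"
begin

text \<open>Non-termination set of the loop  while (B x > 0) { x := A x },
  with A a real 2x2 matrix and B a real 1x2 matrix; A^k x is written as the k-fold iterate of x |-> A x.\<close>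
definition NT :: "real^2^2 \<Rightarrow> real^2^1 \<Rightarrow> (real^2) set" where
  "NT A B = {x. \<forall>k::nat. (B *v (((\<lambda>y. A *v y) ^^ k) x)) $ 1 > 0}"

end

theory Submission
  imports Defs
begin

(*
  The non-termination set N = NT A B satisfies the one-step
  unfolding  N = {y. 0 < B y \<and> A y \<in> N}:  the loop runs forever from y iff
  the guard holds at y and the loop runs forever from A y.  Everything else
  is pure topology for a set N solving  N = {y. 0 < g y \<and> f y \<in> N}  with
  f and g continuous:
    - f maps N, hence (by continuity) closure N, into closure N;
    - closure N lies in the closed half-space {g \<ge> 0};
    - if g x > 0 and f x is an interior point of N, then x is an interior
      point of N (the open set of y with g y > 0 and f y \<in> interior N lies in N).
  For x on the frontier with g x \<noteq> 0 this gives g x > 0, f x \<in> closure N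
  and f x \<notin> interior N, i.e. f x \<in> frontier N.  The theorem is the
  instance f = (A *v), g = (\<lambda>y. (B *v y) $ 1).
*)

lemma NT_unfold: "NT A B = {y. 0 < (B *v y) $ 1 \<and> A *v y \<in> NT A B}"
proof (intro set_eqI iffI)
  fix y assume "y \<in> NT A B"
  then have all: "\<And>k. 0 < (B *v (((\<lambda>y. A *v y) ^^ k) y)) $ 1"
    unfolding NT_def by blast
  have "0 < (B *v y) $ 1" using all[of 0] by simp
  moreover have "0 < (B *v (((\<lambda>y. A *v y) ^^ k) (A *v y))) $ 1" for k
    using all[of "Suc k"] by (simp only: funpow_Suc_right comp_apply)
  then have "A *v y \<in> NT A B" unfolding NT_def by blast
  ultimately show "y \<in> {y. 0 < (B *v y) $ 1 \<and> A *v y \<in> NT A B}" by simp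
next
  fix y assume "y \<in> {y. 0 < (B *v y) $ 1 \<and> A *v y \<in> NT A B}"
  then have guard: "0 < (B *v y) $ 1"
    and rest: "\<And>k. 0 < (B *v (((\<lambda>y. A *v y) ^^ k) (A *v y))) $ 1"
    unfolding NT_def by auto
  have "0 < (B *v (((\<lambda>y. A *v y) ^^ k) y)) $ 1" for k
    using guard rest by (cases k) (simp_all del: funpow.simps add: funpow_Suc_right)
  then show "y \<in> NT A B" unfolding NT_def by blast
qed

lemma closure_invariant_unfold:
  fixes f :: "'a::topological_space \<Rightarrow> 'a" and g :: "'a \<Rightarrow> real"
  assumes N: "N = {y. 0 < g y \<and> f y \<in> N}" and f: "continuous_on UNIV f"
  shows "f ` closure N \<subseteq> closure N"
proof -
  have "f ` N \<subseteq> closure N" using N closure_subset by blast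
  then show ?thesis
    by (intro image_closure_subset continuous_on_subset[OF f]) auto
qed

text \<open>Such a set lies in the open half-space {g > 0}, so its closure lies
  in the closed half-space {g \<ge> 0}.\<close>
lemma closure_unfold_nonneg:
  fixes f :: "'a::topological_space \<Rightarrow> 'a" and g :: "'a \<Rightarrow> real"
  assumes N: "N = {y. 0 < g y \<and> f y \<in> N}" and g: "continuous_on UNIV g"
  shows "closure N \<subseteq> {y. 0 \<le> g y}"
proof (rule closure_minimal)
  show "N \<subseteq> {y. 0 \<le> g y}"
  proof
    fix y assume "y \<in> N"
    then have "0 < g y" by (subst (asm) N) simp
    then show "y \<in> {y. 0 \<le> g y}" by simp
  qed
  show "closed {y. 0 \<le> g y}" by (intro closed_Collect_le continuous_intros g)
qed

text \<open>Interior points propagate backwards along f wherever the guard holds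
  strictly: the points y with g y > 0 and f y \<in> interior N form an open
  set contained in N.\<close>
lemma interior_unfold_backward:
  fixes f :: "'a::topological_space \<Rightarrow> 'a" and g :: "'a \<Rightarrow> real"
  assumes N: "N = {y. 0 < g y \<and> f y \<in> N}"
    and f: "continuous_on UNIV f" and g: "continuous_on UNIV g"
    and gx: "0 < g x" and fx: "f x \<in> interior N"
  shows "x \<in> interior N"
proof -
  let ?T = "{y. 0 < g y} \<inter> f -` interior N"
  have "open ?T"
    by (intro open_Int open_Collect_less open_vimage f g continuous_intros) simp_all
  moreover have "?T \<subseteq> N" using N interior_subset by blast
  moreover have "x \<in> ?T" using gx fx by simp
  ultimately show ?thesis by (meson interior_maximal interior_open subsetD)
qed

lemma frontier_unfold_step:
  fixes f :: "'a::topological_space \<Rightarrow> 'a" and g :: "'a \<Rightarrow> real"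
  assumes N: "N = {y. 0 < g y \<and> f y \<in> N}"
    and f: "continuous_on UNIV f" and g: "continuous_on UNIV g"
    and x: "x \<in> frontier N" and gx: "g x \<noteq> 0"
  shows "f x \<in> frontier N"
proof -
  have xc: "x \<in> closure N" and xi: "x \<notin> interior N"
    using x by (auto simp: frontier_def)
  have "f x \<in> closure N" using closure_invariant_unfold[OF N f] xc by blast
  moreover have "0 < g x" using closure_unfold_nonneg[OF N g] xc gx by force
  then have "f x \<notin> interior N" using interior_unfold_backward[OF N f g] xi by blast
  ultimately show ?thesis by (simp add: frontier_def)
qed

theorem lemma1:
  fixes A :: "real^2^2" and B :: "real^2^1" and x :: "real^2"
  assumes "NT A B \<noteq> {}"
    and "x \<in> frontier (NT A B)"
    and "B *v x \<noteq> 0"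
  shows "A *v x \<in> frontier (NT A B)"
proof (rule frontier_unfold_step[OF NT_unfold])
  show "continuous_on UNIV (\<lambda>y::real^2. A *v y)" by (intro continuous_intros)
  show "continuous_on UNIV (\<lambda>y::real^2. (B *v y) $ 1)" by (intro continuous_intros)
  show "x \<in> frontier (NT A B)" by fact
  show "(B *v x) $ 1 \<noteq> 0"
    using assms(3) by (simp add: vec_eq_iff forall_1)
qed

end
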